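(* Let $p>2$ be prime. For $t\in\mathbb{Z}/p\mathbb{Z}$ put $a_t(p)=-\sum_{x\bmod p}\left(\frac{x^3-t^2x+t^2}{p}\right)$. Then $\sum_{t\bmod p} a_t(p) = -2p$.
   Context: $\left(\frac{\cdot}{p}\right)$ denotes the Legendre symbol (equal to $0$ at multiples of $p$). *)

theory Defs
  imports "HOL-Number_Theory.Number_Theory"
begin

definition a_coeff :: "int \<Rightarrow> int \<Rightarrow> int" where
  "a_coeff p t = - (\<Sum>x\<in>{0..p-1}. Legendre (x^3 - t^2 * x + t^2) p)"

end

theory Submission
  imports Defs
begin

text \<open>For \<open>t = 0\<close> the summand is \<open>(x\<^sup>3/p) = (x/p)\<close>, and the Legendre symbol sums to zero
  over a full residue system. For \<open>t \<noteq> 0\<close> the substitution \<open>x = t y\<close> turns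
  \<open>x\<^sup>3 - t\<^sup>2 x + t\<^sup>2\<close> into \<open>t\<^sup>2 ((y\<^sup>3 - y) t + 1)\<close>, and the square \<open>t\<^sup>2\<close> can be dropped.
  Summing over \<open>t \<noteq> 0\<close> first, \<open>\<Sum>\<^sub>t ((w t + 1)/p)\<close> is \<open>p - 1\<close> if \<open>p\<close> divides
  \<open>w = y\<^sup>3 - y\<close> and \<open>-1\<close> otherwise; since \<open>y\<^sup>3 - y\<close> has exactly the three roots
  \<open>0, 1, -1\<close> modulo \<open>p\<close>, the total is \<open>3p - p = 2p\<close>.\<close>

lemma Legendre_mod: "Legendre (a mod p) p = Legendre a p"
  unfolding Legendre_def QuadRes_def cong_def by simp

lemma Legendre_cong: "[a = b] (mod p) \<Longrightarrow> Legendre a p = Legendre b p"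
  by (metis Legendre_mod cong_def)

lemma Legendre_cases: "Legendre a p \<in> {-1, 0, 1}"
  unfolding Legendre_def by auto

lemma Legendre_one: "p > 1 \<Longrightarrow> Legendre 1 p = 1"
  unfolding Legendre_def QuadRes_def cong_def by (auto intro: exI[of _ 1])

lemma Legendre_eq_0_iff: "Legendre a p = 0 \<longleftrightarrow> p dvd a"
  unfolding Legendre_def by (auto simp: cong_0_iff)

lemma prime_int_as_nat:
  fixes p :: int
  assumes "prime p" "p > 2"
  obtains q :: nat where "prime q" "q > 2" "p = int q" "nat ((p - 1) div 2) = (q - 1) div 2"
proof
  show "prime (nat p)" "nat p > 2" "p = int (nat p)" using assms by auto
  show "nat ((p - 1) div 2) = (nat p - 1) div 2"
    using assms(2) by (simp add: nat_div_distrib nat_diff_distrib')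
qed

lemma euler_criterion_int:
  fixes p :: int
  assumes "prime p" "p > 2"
  shows "[Legendre a p = a ^ nat ((p - 1) div 2)] (mod p)"
proof -
  obtain q where "prime q" "q > 2" "p = int q" "nat ((p - 1) div 2) = (q - 1) div 2"
    using prime_int_as_nat[OF assms] .
  then show ?thesis using euler_criterion[of q a] by simp
qed

lemma dvd_abs_less_imp_eq_0:
  fixes k p :: int
  assumes "p dvd k" "\<bar>k\<bar> < p"
  shows "k = 0"
  using dvd_imp_le_int[of k p] assms by fastforce

lemma Legendre_mult:
  assumes "prime p" "p > 2"
  shows "Legendre (a * b) p = Legendre a p * Legendre b p"
proof -
  let ?e = "nat ((p - 1) div 2)"
  have "[Legendre (a * b) p = (a * b) ^ ?e] (mod p)"
    by (rule euler_criterion_int[OF assms])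
  also have "(a * b) ^ ?e = a ^ ?e * b ^ ?e"
    by (rule power_mult_distrib)
  also have "[a ^ ?e * b ^ ?e = Legendre a p * Legendre b p] (mod p)"
    by (intro cong_mult cong_sym[OF euler_criterion_int[OF assms]])
  finally have "p dvd Legendre (a * b) p - Legendre a p * Legendre b p"
    by (simp add: cong_iff_dvd_diff)
  moreover have "\<bar>Legendre (a * b) p - Legendre a p * Legendre b p\<bar> < p"
    using Legendre_cases[of "a * b" p] Legendre_cases[of a p] Legendre_cases[of b p] assms(2)
    by auto
  ultimately have "Legendre (a * b) p - Legendre a p * Legendre b p = 0"
    by (rule dvd_abs_less_imp_eq_0)
  then show ?thesis by simp
qed

lemma Legendre_square_mult:
  assumes "prime p" "p > 2" "\<not> p dvd t"
  shows "Legendre (t\<^sup>2 * a) p = Legendre a p"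
proof -
  have "Legendre t p \<in> {-1, 1}"
    using Legendre_cases[of t p] Legendre_eq_0_iff[of t p] assms(3) by auto
  then show ?thesis by (auto simp: power2_eq_square Legendre_mult[OF assms(1,2)])
qed

lemma Legendre_cube:
  assumes "prime p" "p > 2"
  shows "Legendre (a ^ 3) p = Legendre a p"
proof -
  have "Legendre (a ^ 3) p = Legendre a p * (Legendre a p * Legendre a p)"
    by (simp add: power3_eq_cube Legendre_mult[OF assms] mult.assoc)
  then show ?thesis using Legendre_cases[of a p] by auto
qed

lemma Legendre_nonresidue_exists:
  assumes "prime p" "p > 2"
  obtains n where "Legendre n p = -1"
proof -
  obtain q where q: "prime q" "q > 2" "p = int q" and e: "nat ((p - 1) div 2) = (q - 1) div 2"
    using prime_int_as_nat[OF assms] .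
  obtain g where "residue_primroot q g"
    using prime_primitive_root_exists[of q] q(1,2) by auto
  then have ord: "ord q g = q - 1" and cop: "coprime q g"
    using q by (auto simp: residue_primroot_def totient_prime)
  have "\<not> [g ^ ((q - 1) div 2) = 1] (mod q)"
    by (rule ord_minimal) (use ord q(2) in auto)
  then have "\<not> [int g ^ nat ((p - 1) div 2) = 1] (mod p)"
    using e q(3) cong_int_iff[of "g ^ ((q - 1) div 2)" 1 q] by simp
  then have "Legendre (int g) p \<noteq> 1"
    using euler_criterion_int[OF assms, of "int g"] by (metis cong_sym)
  moreover have "Legendre (int g) p \<noteq> 0"
  proof
    assume "Legendre (int g) p = 0"
    then have "q dvd g" using Legendre_eq_0_iff q(3) by (metis int_dvd_int_iff)
    with cop q(1) show False using coprime_absorb_left not_prime_unit by blast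
  qed
  ultimately show ?thesis
    using Legendre_cases[of "int g" p] that by blast
qed

lemma bij_betw_affine_mod:
  fixes a b p :: int
  assumes "p > 0" "coprime a p"
  shows "bij_betw (\<lambda>x. (a * x + b) mod p) {0..p-1} {0..p-1}"
proof -
  let ?h = "\<lambda>x. (a * x + b) mod p"
  have inj: "inj_on ?h {0..p-1}"
  proof (rule inj_onI)
    fix x y assume xy: "x \<in> {0..p-1}" "y \<in> {0..p-1}" "?h x = ?h y"
    then have "[a * x = a * y] (mod p)"
      by (metis cong_add_rcancel cong_def)
    then have "[x = y] (mod p)" using assms(2) by (metis cong_mult_lcancel)
    then show "x = y" using xy(1,2) by (simp add: cong_def)
  qed
  moreover have "?h ` {0..p-1} \<subseteq> {0..p-1}" using assms(1) by auto
  ultimately have "?h ` {0..p-1} = {0..p-1}" by (intro endo_inj_surj) simp_all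
  with inj show ?thesis by (simp add: bij_betw_def)
qed

lemma sum_mod_affine_reindex:
  fixes a b p :: int
  assumes "p > 0" "coprime a p"
  shows "(\<Sum>x\<in>{0..p-1}. f ((a * x + b) mod p)) = (\<Sum>x\<in>{0..p-1}. f x)"
  using sum.reindex_bij_betw[OF bij_betw_affine_mod[OF assms]] .

lemma prime_not_dvd_imp_coprime:
  fixes p :: "'a :: semiring_gcd"
  shows "prime p \<Longrightarrow> \<not> p dvd a \<Longrightarrow> coprime a p"
  by (metis coprime_commute prime_imp_coprime)

lemma sum_Legendre_eq_0:
  assumes "prime p" "p > 2"
  shows "(\<Sum>x\<in>{0..p-1}. Legendre x p) = 0"
proof -
  obtain n where n: "Legendre n p = -1" using Legendre_nonresidue_exists[OF assms] .
  then have "\<not> p dvd n" by (simp flip: Legendre_eq_0_iff)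
  then have "coprime n p" by (rule prime_not_dvd_imp_coprime[OF assms(1)])
  then have "(\<Sum>x\<in>{0..p-1}. Legendre x p) = (\<Sum>x\<in>{0..p-1}. Legendre (n * x mod p) p)"
    using sum_mod_affine_reindex[of p n "\<lambda>x. Legendre x p" 0] assms(2) by simp
  also have "\<dots> = (\<Sum>x\<in>{0..p-1}. - Legendre x p)"
    by (simp add: Legendre_mod Legendre_mult[OF assms] n)
  finally show ?thesis by (simp add: sum_negf)
qed

lemma sum_Legendre_linear:
  assumes "prime p" "p > 2"
  shows "(\<Sum>t\<in>{0..p-1}. Legendre (w * t + b) p) = (if p dvd w then p * Legendre b p else 0)"
proof (cases "p dvd w")
  case True
  then have "Legendre (w * t + b) p = Legendre b p" for t
    by (intro Legendre_cong) (simp add: cong_iff_dvd_diff)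
  with True assms(2) show ?thesis by simp
next
  case False
  then have "coprime w p" by (rule prime_not_dvd_imp_coprime[OF assms(1)])
  then have "(\<Sum>t\<in>{0..p-1}. Legendre ((w * t + b) mod p) p) = (\<Sum>x\<in>{0..p-1}. Legendre x p)"
    using sum_mod_affine_reindex[of p w "\<lambda>x. Legendre x p" b] assms(2) by simp
  with False show ?thesis by (simp add: Legendre_mod sum_Legendre_eq_0[OF assms])
qed

lemma sum_Legendre_linear_units:
  assumes "prime p" "p > 2"
  shows "(\<Sum>t\<in>{1..p-1}. Legendre (w * t + 1) p) = (if p dvd w then p else 0) - 1"
proof -
  have one: "Legendre 1 p = 1" using assms(2) by (simp add: Legendre_one)
  have "(if p dvd w then p else 0) = (\<Sum>t\<in>{0..p-1}. Legendre (w * t + 1) p)"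
    using sum_Legendre_linear[OF assms, of w 1] by (simp add: one)
  also have "{0..p-1} = insert 0 {1..p-1}" using assms(2) by auto
  finally show ?thesis by (simp add: one)
qed

lemma a_coeff_0:
  assumes "prime p" "p > 2"
  shows "a_coeff p 0 = 0"
  by (simp add: a_coeff_def Legendre_cube[OF assms] sum_Legendre_eq_0[OF assms])

lemma a_coeff_rescale:
  assumes "prime p" "p > 2" "\<not> p dvd t"
  shows "a_coeff p t = - (\<Sum>y\<in>{0..p-1}. Legendre ((y ^ 3 - y) * t + 1) p)"
proof -
  let ?f = "\<lambda>x. Legendre (x ^ 3 - t\<^sup>2 * x + t\<^sup>2) p"
  have "coprime t p" by (rule prime_not_dvd_imp_coprime[OF assms(1,3)])
  then have "(\<Sum>x\<in>{0..p-1}. ?f x) = (\<Sum>y\<in>{0..p-1}. ?f (t * y mod p))"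
    using sum_mod_affine_reindex[of p t ?f 0] assms(2) by simp
  also have "\<dots> = (\<Sum>y\<in>{0..p-1}. Legendre ((y ^ 3 - y) * t + 1) p)"
  proof (rule sum.cong[OF refl])
    fix y
    have "?f (t * y mod p) = ?f (t * y)"
      by (intro Legendre_cong cong_add cong_diff cong_mult cong_pow cong_refl) (simp_all add: cong_def)
    also have "(t * y) ^ 3 - t\<^sup>2 * (t * y) + t\<^sup>2 = t\<^sup>2 * ((y ^ 3 - y) * t + 1)"
      by (simp add: algebra_simps power2_eq_square power3_eq_cube)
    finally show "?f (t * y mod p) = Legendre ((y ^ 3 - y) * t + 1) p"
      using Legendre_square_mult[OF assms] by simp
  qed
  finally show ?thesis by (simp add: a_coeff_def)
qed

lemma roots_cube_minus_self_mod_prime: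
  fixes p :: int
  assumes "prime p" "p > 2"
  shows "{y\<in>{0..p-1}. p dvd y ^ 3 - y} = {0, 1, p-1}"
proof (intro equalityI subsetI)
  fix y assume y: "y \<in> {y\<in>{0..p-1}. p dvd y ^ 3 - y}"
  then have range: "0 \<le> y" "y < p" by auto
  have "y ^ 3 - y = (y - 1) * y * (y + 1)"
    by (simp add: algebra_simps power3_eq_cube)
  then have "p dvd y - 1 \<or> p dvd y \<or> p dvd y + 1"
    using y assms(1) by (simp add: prime_dvd_mult_iff)
  then consider "p dvd y - 1" | "p dvd y" | "p dvd y + 1 - p"
    by (auto simp: dvd_diff)
  then show "y \<in> {0, 1, p-1}"
  proof cases
    case 1
    then have "y - 1 = 0" by (rule dvd_abs_less_imp_eq_0) (use range assms(2) in auto)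
    then show ?thesis by simp
  next
    case 2
    then have "y = 0" by (rule dvd_abs_less_imp_eq_0) (use range assms(2) in auto)
    then show ?thesis by simp
  next
    case 3
    then have "y + 1 - p = 0" by (rule dvd_abs_less_imp_eq_0) (use range assms(2) in auto)
    then show ?thesis by simp
  qed
next
  have "(p - 1) ^ 3 - (p - 1) = p * ((p - 1) * (p - 2))"
    by (simp add: algebra_simps power3_eq_cube)
  then show "y \<in> {y\<in>{0..p-1}. p dvd y ^ 3 - y}" if "y \<in> {0, 1, p-1}" for y
    using that assms(2) by auto
qed

theorem mainTheorem6:
  fixes p :: int
  assumes "prime p" and "p > 2"
  shows "(\<Sum>t\<in>{0..p-1}. a_coeff p t) = - 2 * p"
proof -
  let ?w = "\<lambda>y. y ^ 3 - y"
  have units: "\<not> p dvd t" if "t \<in> {1..p-1}" for t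
    using that zdvd_imp_le by fastforce
  have "{0..p-1} = insert 0 {1..p-1}" using assms(2) by auto
  then have "(\<Sum>t\<in>{0..p-1}. a_coeff p t) = (\<Sum>t\<in>{1..p-1}. a_coeff p t)"
    by (simp add: a_coeff_0[OF assms])
  also have "\<dots> = - (\<Sum>t\<in>{1..p-1}. \<Sum>y\<in>{0..p-1}. Legendre (?w y * t + 1) p)"
    by (simp add: a_coeff_rescale[OF assms units] sum_negf)
  also have "\<dots> = - (\<Sum>y\<in>{0..p-1}. (if p dvd ?w y then p else 0) - 1)"
    by (subst sum.swap) (simp add: sum_Legendre_linear_units[OF assms])
  also have "\<dots> = p - (\<Sum>y\<in>{0..p-1}. if p dvd ?w y then p else 0)"
    using assms(2) by (simp add: sum_subtractf)
  also have "(\<Sum>y\<in>{0..p-1}. if p dvd ?w y then p else 0) = (\<Sum>y\<in>{y\<in>{0..p-1}. p dvd ?w y}. p)"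
    by (rule sum.inter_filter[symmetric]) simp
  also have "\<dots> = 3 * p"
    using roots_cube_minus_self_mod_prime[OF assms] assms(2) by simp
  finally show ?thesis by simp
qed

end
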